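(* Let $n\ge1$, $q$ a prime power, and let $(\mathsf{Enc},\mathcal{A})$ be any $n$-party one-round aggregation protocol over $\mathbb{F}_q$ in the anonymized model with encoder $\mathsf{Enc}:\mathbb{F}_q\to[\ell]^m$. Then for each $s\in\mathbb{F}_q$ there exist $\mathbf{x},\mathbf{x}'\in\mathcal{B}_s$ such that $$\mathrm{SD}\left(\mathcal{S}^{\mathsf{Enc}}_{\mathbf{x}},\mathcal{S}^{\mathsf{Enc}}_{\mathbf{x}'}\right)\ge1-\frac{n^{nm}}{q^{n-1}}.$$
   Context: $\mathcal{B}_s=\{\mathbf{x}\in\mathbb{F}_q^n:\sum_ix_i=s\}$; $\mathrm{SD}$ is statistical distance. An $n$-party one-round aggregation protocol over $\mathbb{F}_q$ with $m$ messages per party consists of a randomized encoder $\mathsf{Enc}:\mathbb{F}_q\to[\ell]^m$ (for some positive integer $\ell$; each party applies it to its input with independent randomness) and an analyzer $\mathcal{A}:[\ell]^{nm}\to\mathbb{F}_q$ such that for every $\mathbf{x}\in\mathbb{F}_q^n$, every possible realization of the encodings $\mathsf{Enc}(x_1),\dots,\mathsf{Enc}(x_n)$, and every permutation $\pi$ of $[nm]$, the analyzer applied to the concatenation $(\mathsf{Enc}(x_1),\dots,\mathsf{Enc}(x_n))$ with coordinates permuted by $\pi$ outputs $\sum_i x_i$. $\mathcal{S}^{\mathsf{Enc}}_{\mathbf{x}}$ is the distribution on $[\ell]^{nm}$ of this concatenation after applying an independent uniformly random permutation of the $nm$ coordinates. *)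

theory Defs
  imports "HOL-Probability.Probability" "HOL-Combinatorics.Permutations"
begin

definition msg_space :: "nat \<Rightarrow> nat \<Rightarrow> nat list set" where
  "msg_space l m = {e. length e = m \<and> (\<forall>y\<in>set e. y < l)}"

fun enc_all :: "('a \<Rightarrow> nat list pmf) \<Rightarrow> 'a list \<Rightarrow> nat list list pmf" where
  "enc_all Enc [] = return_pmf []"
| "enc_all Enc (x # xs) = bind_pmf (Enc x) (\<lambda>e. map_pmf (\<lambda>es. e # es) (enc_all Enc xs))"

definition is_aggregation_protocol ::
  "nat \<Rightarrow> nat \<Rightarrow> nat \<Rightarrow> ('a::field \<Rightarrow> nat list pmf) \<Rightarrow> (nat list \<Rightarrow> 'a) \<Rightarrow> bool" where
  "is_aggregation_protocol n m l Enc A \<longleftrightarrow>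
     0 < l \<and>
     (\<forall>x. set_pmf (Enc x) \<subseteq> msg_space l m) \<and>
     (\<forall>xs es \<pi>. length xs = n \<longrightarrow> length es = n \<longrightarrow>
        (\<forall>i<n. es ! i \<in> set_pmf (Enc (xs ! i))) \<longrightarrow>
        \<pi> permutes {..<n * m} \<longrightarrow>
        A (permute_list \<pi> (concat es)) = sum_list xs)"

definition B_set :: "nat \<Rightarrow> 'a::field \<Rightarrow> 'a list set" where
  "B_set n s = {xs. length xs = n \<and> sum_list xs = s}"

definition shuffled_view :: "nat \<Rightarrow> nat \<Rightarrow> ('a \<Rightarrow> nat list pmf) \<Rightarrow> 'a list \<Rightarrow> nat list pmf" where
  "shuffled_view n m Enc xs =
     bind_pmf (enc_all Enc xs) (\<lambda>es.
       map_pmf (\<lambda>\<pi>. permute_list \<pi> (concat es)) (pmf_of_set {\<pi>. \<pi> permutes {..<n * m}}))"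

definition stat_dist :: "'b pmf \<Rightarrow> 'b pmf \<Rightarrow> real" where
  "stat_dist P Q = (SUP E. \<bar>measure_pmf.prob P E - measure_pmf.prob Q E\<bar>)"

end

theory Submission
  imports Defs
begin

(*
  The aggregate must be recoverable from the shuffled messages, so the multiset of messages sent by
  a single party already determines that party's input.  Hence a view v, together with the map
  sending each of its n*m positions to the party that sent it, determines the whole input vector;
  at most n^(n*m) inputs are therefore consistent with v.  Fixing x in B_s and averaging over the
  q^(n-1) vectors x' in B_s, some x' has a support that carries at most n^(n*m)/q^(n-1) of the
  mass of S_x, and the complement of that support is the distinguishing event.
*)

lemma stat_dist_ge_compl_support:
  "1 - measure_pmf.prob P (set_pmf Q) \<le> stat_dist P Q"
proof -
  have "1 - measure_pmf.prob P (set_pmf Q)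
      = \<bar>measure_pmf.prob P (- set_pmf Q) - measure_pmf.prob Q (- set_pmf Q)\<bar>"
  proof -
    have "measure_pmf.prob Q (- set_pmf Q) = 0"
      by (simp add: measure_pmf_zero_iff)
    moreover have "measure_pmf.prob P (- set_pmf Q) = 1 - measure_pmf.prob P (set_pmf Q)"
      using measure_pmf.prob_compl[of "set_pmf Q" P] by (simp add: Compl_eq_Diff_UNIV)
    ultimately show ?thesis by simp
  qed
  also have "\<dots> \<le> stat_dist P Q"
    unfolding stat_dist_def
  proof (rule cSUP_upper)
    show "bdd_above (range (\<lambda>E. \<bar>measure_pmf.prob P E - measure_pmf.prob Q E\<bar>))"
    proof (rule bdd_aboveI[where M = 1], clarify)
      fix E
      show "\<bar>measure_pmf.prob P E - measure_pmf.prob Q E\<bar> \<le> 1"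
        by (smt (verit) measure_nonneg measure_pmf.prob_le_1)
    qed
  qed simp
  finally show ?thesis .
qed

lemma sum_prob_le_multiplicity:
  fixes P :: "'b pmf" and T :: "'a \<Rightarrow> 'b set"
  assumes "finite B" and "\<And>v. card {x\<in>B. v \<in> T x} \<le> K"
  shows "(\<Sum>x\<in>B. measure_pmf.prob P (T x)) \<le> K"
proof -
  have "(\<Sum>x\<in>B. measure_pmf.prob P (T x)) = (\<Sum>x\<in>B. \<integral>v. indicator (T x) v \<partial>P)"
    by simp
  also have "\<dots> = (\<integral>v. (\<Sum>x\<in>B. indicator (T x) v) \<partial>P)"
    by (rule Bochner_Integration.integral_sum[symmetric]) (simp add: less_top[symmetric])
  also have "\<dots> \<le> K"
  proof (rule measure_pmf.integral_le_const)
    show "integrable P (\<lambda>v. \<Sum>x\<in>B. indicator (T x) v :: real)"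
      by (intro Bochner_Integration.integrable_sum) (simp add: less_top[symmetric])
    have "(\<Sum>x\<in>B. indicator (T x) v :: real) = card {x\<in>B. v \<in> T x}" for v
      using assms(1) by (simp add: indicator_def Int_def)
    then show "AE v in P. (\<Sum>x\<in>B. indicator (T x) v) \<le> real K"
      using assms(2) by simp
  qed
  finally show ?thesis .
qed

lemma ex_le_average:
  fixes f :: "'a \<Rightarrow> real"
  assumes "finite B" "B \<noteq> {}" "sum f B \<le> K"
  obtains x where "x \<in> B" "f x \<le> K / card B"
proof (rule ccontr)
  assume "\<not> thesis"
  then have "\<forall>x\<in>B. K / card B < f x" using that by force
  then have "(\<Sum>x\<in>B. K / card B) < sum f B" using assms by (intro sum_strict_mono) auto
  with assms show False by simp
qed

lemma nth_concat_uniform: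
  assumes "\<forall>e\<in>set es. length e = m" "i < length es"
  shows "es ! i = map ((!) (concat es)) [i * m..<i * m + m]"
  using assms
proof (induction es arbitrary: i)
  case (Cons e es)
  then show ?case
    by (cases i) (auto simp: nth_append map_nth intro!: nth_equalityI)
qed simp

lemma image_mset_nth_permute_list:
  assumes "\<pi> permutes {..<length w}" "K \<subseteq> {..<length w}"
  shows "image_mset ((!) (permute_list \<pi> w)) (mset_set (\<pi> -` K)) = image_mset ((!) w) (mset_set K)"
proof -
  have sub: "\<pi> -` K \<subseteq> {..<length w}"
    using assms permutes_in_image[OF assms(1)] by blast
  have "image_mset ((!) (permute_list \<pi> w)) (mset_set (\<pi> -` K))
      = image_mset ((!) w) (image_mset \<pi> (mset_set (\<pi> -` K)))"
    using sub finite_subset[OF sub] assms(1)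
    by (auto simp: multiset.map_comp permute_list_nth intro!: image_mset_cong)
  also have "image_mset \<pi> (mset_set (\<pi> -` K)) = mset_set (\<pi> ` \<pi> -` K)"
    using permutes_inj[OF assms(1)] by (intro image_mset_mset_set) (simp add: inj_on_def)
  also have "\<pi> ` \<pi> -` K = K"
    using permutes_surj[OF assms(1)] by (simp add: surj_image_vimage_eq)
  finally show ?thesis .
qed

lemma div_eq_iff_mem_block:
  fixes k m i :: nat
  assumes "0 < m"
  shows "k div m = i \<longleftrightarrow> k \<in> {i * m..<i * m + m}"
proof
  assume "k div m = i"
  moreover have "k = k div m * m + k mod m" "k mod m < m"
    using assms by simp_all
  ultimately show "k \<in> {i * m..<i * m + m}"
    by (metis atLeastLessThan_iff le_add1 nat_add_left_cancel_less)
next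
  assume "k \<in> {i * m..<i * m + m}"
  then show "k div m = i"
    by (auto intro: div_nat_eqI simp: mult.commute)
qed

lemma set_pmf_enc_all:
  "set_pmf (enc_all Enc xs) = {es. list_all2 (\<lambda>x e. e \<in> set_pmf (Enc x)) xs es}"
  by (induction xs) (auto simp: list_all2_Cons1)

lemma set_pmf_shuffled_view:
  "set_pmf (shuffled_view n m Enc xs) =
     {permute_list \<pi> (concat es) | \<pi> es.
        \<pi> permutes {..<n * m} \<and> list_all2 (\<lambda>x e. e \<in> set_pmf (Enc x)) xs es}"
proof -
  have "finite {\<pi>. \<pi> permutes {..<n * m}}" "{\<pi>. \<pi> permutes {..<n * m}} \<noteq> {}"
    using finite_permutations permutes_id by blast+
  then show ?thesis
    by (auto simp: shuffled_view_def set_pmf_enc_all)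
qed

lemma length_encoding:
  assumes "is_aggregation_protocol n m l Enc A" "e \<in> set_pmf (Enc x)"
  shows "length e = m"
  using assms by (auto simp: is_aggregation_protocol_def msg_space_def)

lemma length_concat_encodings:
  assumes "is_aggregation_protocol n m l Enc A" "list_all2 (\<lambda>x e. e \<in> set_pmf (Enc x)) xs es"
  shows "length (concat es) = length xs * m"
  using assms(2) by (induction rule: list_all2_induct) (auto simp: length_encoding[OF assms(1)])

lemma aggregation_output:
  assumes "is_aggregation_protocol n m l Enc A"
    and "list_all2 (\<lambda>x e. e \<in> set_pmf (Enc x)) xs es" "length xs = n" "\<pi> permutes {..<n * m}"
  shows "A (permute_list \<pi> (concat es)) = sum_list xs"
  using assms by (auto simp: is_aggregation_protocol_def list_all2_conv_all_nth)

lemma aggregation_sum_eq_if_mset_eq: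
  assumes prot: "is_aggregation_protocol n m l Enc A"
    and es: "list_all2 (\<lambda>x e. e \<in> set_pmf (Enc x)) xs es" "length xs = n"
    and es': "list_all2 (\<lambda>x e. e \<in> set_pmf (Enc x)) xs' es'" "length xs' = n"
    and mset_eq: "mset (concat es) = mset (concat es')"
  shows "sum_list xs = sum_list xs'"
proof -
  obtain p where p: "p permutes {..<length (concat es')}" "permute_list p (concat es') = concat es"
    using mset_eq_permutation[OF mset_eq] .
  have "sum_list xs = A (permute_list id (concat es))"
    using aggregation_output[OF prot es permutes_id] by simp
  also have "\<dots> = A (permute_list p (concat es'))"
    using p(2) by simp
  also have "\<dots> = sum_list xs'"
    using p(1) aggregation_output[OF prot es'] length_concat_encodings[OF prot es'(1)] es'(2) by simp
  finally show ?thesis .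
qed

definition decode :: "('a \<Rightarrow> 'b list pmf) \<Rightarrow> 'b multiset \<Rightarrow> 'a" where
  "decode Enc M = (THE x. \<exists>e\<in>set_pmf (Enc x). mset e = M)"

lemma decode_mset_encoding:
  fixes Enc :: "'a::field \<Rightarrow> nat list pmf"
  assumes prot: "is_aggregation_protocol n m l Enc A" and "1 \<le> n" and e: "e \<in> set_pmf (Enc x)"
  shows "decode Enc (mset e) = x"
  unfolding decode_def
proof (rule the_equality)
  show "\<exists>e'\<in>set_pmf (Enc x). mset e' = mset e"
    using e by blast
next
  fix y assume "\<exists>e'\<in>set_pmf (Enc y). mset e' = mset e"
  then obtain e' where e': "e' \<in> set_pmf (Enc y)" "mset e' = mset e" by blast
  obtain z where z: "z \<in> set_pmf (Enc 0)"
    using set_pmf_not_empty by fast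
  let ?zs = "replicate (n - 1) (0::'a)" and ?ezs = "replicate (n - 1) z"
  have encs: "list_all2 (\<lambda>x e. e \<in> set_pmf (Enc x)) (y # ?zs) (e' # ?ezs)"
       "list_all2 (\<lambda>x e. e \<in> set_pmf (Enc x)) (x # ?zs) (e # ?ezs)"
    using e e' z by (auto simp: list_all2_conv_all_nth nth_Cons split: nat.split)
  have "sum_list (y # ?zs) = sum_list (x # ?zs)"
    using aggregation_sum_eq_if_mset_eq[OF prot encs(1) _ encs(2)] e'(2) \<open>1 \<le> n\<close> by simp
  then show "y = x" by simp
qed

lemma shuffled_view_blocks:
  assumes prot: "is_aggregation_protocol n m l Enc A"
    and v: "v \<in> set_pmf (shuffled_view n m Enc x)" and "length x = n"
  shows "\<exists>g\<in>{..<n * m} \<rightarrow>\<^sub>E {..<n}. \<forall>i<n. \<exists>e\<in>set_pmf (Enc (x ! i)).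
           mset e = image_mset ((!) v) (mset_set {j\<in>{..<n * m}. g j = i})"
proof -
  obtain \<pi> es where \<pi>: "\<pi> permutes {..<n * m}"
    and es: "list_all2 (\<lambda>x e. e \<in> set_pmf (Enc x)) x es"
    and v_eq: "v = permute_list \<pi> (concat es)"
    using v by (auto simp: set_pmf_shuffled_view)
  have len: "length (concat es) = n * m"
    using length_concat_encodings[OF prot es] \<open>length x = n\<close> by simp
  have lens: "\<forall>e\<in>set es. length e = m"
    using es by (induction rule: list_all2_induct) (auto intro: length_encoding[OF prot])
  \<comment> \<open>\<open>g j\<close> is the party whose encoding supplied position \<open>j\<close> of the view\<close>
  define g where "g = restrict (\<lambda>j. \<pi> j div m) {..<n * m}"
  have "g \<in> {..<n * m} \<rightarrow>\<^sub>E {..<n}"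
    using permutes_in_image[OF \<pi>] by (auto simp: g_def less_mult_imp_div_less)
  moreover have "\<exists>e\<in>set_pmf (Enc (x ! i)).
      mset e = image_mset ((!) v) (mset_set {j\<in>{..<n * m}. g j = i})" if i: "i < n" for i
  proof
    have block: "{i * m..<i * m + m} \<subseteq> {..<n * m}"
      using i by (auto simp: less_le_trans[OF _ mult_le_mono1[of "Suc i" n m]])
    have "{j\<in>{..<n * m}. g j = i} = \<pi> -` {i * m..<i * m + m}"
    proof (cases "m = 0")
      case False
      then show ?thesis
        using block permutes_in_image[OF \<pi>] by (auto simp: g_def div_eq_iff_mem_block)
    qed simp
    then have "image_mset ((!) v) (mset_set {j\<in>{..<n * m}. g j = i})
        = image_mset ((!) (concat es)) (mset_set {i * m..<i * m + m})"
      using image_mset_nth_permute_list[of \<pi> "concat es"] \<pi> block len v_eq by simp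
    also have "\<dots> = mset (es ! i)"
      using nth_concat_uniform[OF lens, of i] es i \<open>length x = n\<close>
      by (simp add: list_all2_lengthD)
    finally show "mset (es ! i) = image_mset ((!) v) (mset_set {j\<in>{..<n * m}. g j = i})" ..
    show "es ! i \<in> set_pmf (Enc (x ! i))"
      using es i \<open>length x = n\<close> by (simp add: list_all2_conv_all_nth)
  qed
  ultimately show ?thesis by blast
qed

lemma card_inputs_of_view:
  fixes Enc :: "'a::field \<Rightarrow> nat list pmf"
  assumes prot: "is_aggregation_protocol n m l Enc A" and "1 \<le> n"
  shows "card {x. length x = n \<and> v \<in> set_pmf (shuffled_view n m Enc x)} \<le> n ^ (n * m)"
proof -
  let ?G = "{..<n * m} \<rightarrow>\<^sub>E {..<n}"
  let ?decode_blocks =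
    "\<lambda>g. map (\<lambda>i. decode Enc (image_mset ((!) v) (mset_set {j\<in>{..<n * m}. g j = i}))) [0..<n]"
  have "{x. length x = n \<and> v \<in> set_pmf (shuffled_view n m Enc x)} \<subseteq> ?decode_blocks ` ?G"
  proof (rule subsetI)
    fix x :: "'a list" assume "x \<in> {x. length x = n \<and> v \<in> set_pmf (shuffled_view n m Enc x)}"
    then have x: "length x = n" "v \<in> set_pmf (shuffled_view n m Enc x)" by simp_all
    then obtain g where g: "g \<in> ?G" and blocks: "\<forall>i<n. \<exists>e\<in>set_pmf (Enc (x ! i)).
        mset e = image_mset ((!) v) (mset_set {j\<in>{..<n * m}. g j = i})"
      using shuffled_view_blocks[OF prot x(2)] by blast
    have "x ! i = decode Enc (image_mset ((!) v) (mset_set {j\<in>{..<n * m}. g j = i}))"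
      if "i < n" for i
      using blocks that decode_mset_encoding[OF prot \<open>1 \<le> n\<close>] by metis
    then have "x = ?decode_blocks g"
      using x(1) by (auto intro!: nth_equalityI)
    with g show "x \<in> ?decode_blocks ` ?G" by blast
  qed
  then have "card {x. length x = n \<and> v \<in> set_pmf (shuffled_view n m Enc x)}
      \<le> card (?decode_blocks ` ?G)"
    by (intro card_mono finite_imageI finite_PiE) auto
  also have "\<dots> \<le> card ?G"
    by (intro card_image_le finite_PiE) auto
  also have "\<dots> = n ^ (n * m)"
    by (simp add: card_PiE)
  finally show ?thesis .
qed

lemma card_B_set:
  assumes "1 \<le> n"
  shows "card (B_set n (s::'a::{finite,field})) = CARD('a) ^ (n - 1)"
proof -
  have "bij_betw tl (B_set n s) {ys. set ys \<subseteq> UNIV \<and> length ys = n - 1}"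
  proof (rule bij_betw_byWitness[where f' = "\<lambda>ys. (s - sum_list ys) # ys"])
    show "\<forall>x\<in>B_set n s. (s - sum_list (tl x)) # tl x = x"
      using assms by (auto simp: B_set_def Suc_le_length_iff)
  qed (use assms in \<open>auto simp: B_set_def\<close>)
  then have "card (B_set n s) = card {ys. set ys \<subseteq> (UNIV::'a set) \<and> length ys = n - 1}"
    by (rule bij_betw_same_card)
  also have "\<dots> = CARD('a) ^ (n - 1)"
    by (rule card_lists_length_eq) simp
  finally show ?thesis .
qed

theorem mainTheorem14:
  fixes Enc :: "'a::{finite, field} \<Rightarrow> nat list pmf"
    and A :: "nat list \<Rightarrow> 'a"
    and n m l :: nat
  assumes "1 \<le> n"
    and "is_aggregation_protocol n m l Enc A"
  shows "\<forall>s::'a. \<exists>x\<in>B_set n s. \<exists>x'\<in>B_set n s.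
           stat_dist (shuffled_view n m Enc x) (shuffled_view n m Enc x')
             \<ge> 1 - real n ^ (n * m) / real CARD('a) ^ (n - 1)"
proof
  fix s :: 'a
  let ?S = "shuffled_view n m Enc"
  define x where "x = s # replicate (n - 1) 0"
  have x: "x \<in> B_set n s"
    using assms(1) by (simp add: x_def B_set_def sum_list_replicate)
  have fin_lists: "finite {x::'a list. length x = n}"
    using finite_lists_length_eq[of "UNIV::'a set" n] by simp
  have fin: "finite (B_set n s)"
    by (rule finite_subset[OF _ fin_lists]) (auto simp: B_set_def)
  have "card {x'\<in>B_set n s. v \<in> set_pmf (?S x')} \<le> n ^ (n * m)" for v
    by (rule order.trans[OF card_mono card_inputs_of_view[OF assms(2,1)]])
      (auto simp: B_set_def intro: finite_subset[OF _ fin_lists])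
  then have "(\<Sum>x'\<in>B_set n s. measure_pmf.prob (?S x) (set_pmf (?S x'))) \<le> n ^ (n * m)"
    by (rule sum_prob_le_multiplicity[OF fin])
  then obtain x' where x': "x' \<in> B_set n s"
    and small: "measure_pmf.prob (?S x) (set_pmf (?S x')) \<le> n ^ (n * m) / card (B_set n s)"
    using ex_le_average[OF fin] x by blast
  have "1 - real n ^ (n * m) / real CARD('a) ^ (n - 1) \<le> stat_dist (?S x) (?S x')"
    using small card_B_set[OF assms(1), of s] stat_dist_ge_compl_support[of "?S x" "?S x'"]
    by simp
  with x x' show "\<exists>x\<in>B_set n s. \<exists>x'\<in>B_set n s. stat_dist (?S x) (?S x')
      \<ge> 1 - real n ^ (n * m) / real CARD('a) ^ (n - 1)" by blast
qed

end
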